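(* For $k\in\mathbb{N}^{d+1}$, $(\mathfrak t,p)\in\mathcal E$, $\mathfrak l\in\mathfrak L$ and any $\hat F\in\mathcal{D}_{\mathfrak l}\otimes\mathscr P$ one has $$\sum_{\ell\in\mathbb N^{d+1}}\binom{k}{\ell}\partial^{k-\ell}D_{(\mathfrak t,p-\ell)}\hat F=D_{(\mathfrak t,p)}\,\partial^k\hat F,$$ with the convention that $\partial^q=D_{(\mathfrak t,q)}=0$ unless $q_i\ge0$ for all $i$.
   Context: Fix $d\ge1$, a finite set $\mathfrak L$ of labels, and $\mathcal E=\mathfrak L\times\mathbb{N}^{d+1}$. Let $(\mathfrak X_o)_{o\in\mathcal E}$ be commuting indeterminates and $\mathscr P$ the real algebra of smooth functions of finitely many of them. For $o\in\mathcal E$, $D_o:\mathscr P\to\mathscr P$ is differentiation with respect to $\mathfrak X_o$; for $i\in\{0,\dots,d\}$, with $e_i$ the canonical basis vectors, set $\partial_i\mathfrak X_{(\mathfrak t,p)}=\mathfrak X_{(\mathfrak t,p+e_i)}$ and $\partial_iF=\sum_o\partial_i\mathfrak X_o\,D_oF$. For each $\mathfrak l\in\mathfrak L$ a finite subset $\mathcal E_+(\mathfrak l)\subset\mathcal E$ is given, and for a fixed integer $k_\star$, $\mathcal D_{\mathfrak l}$ is the commutative unital algebra generated by $\{\mathfrak d_o\}_{o\in\mathcal E_+(\mathfrak l)}$ quotiented by the ideal generated by monomials $\mathfrak d^\alpha$ with $\max_o\alpha_o>k_\star$. On $\mathcal D_{\mathfrak l}$ set $D_o\mathfrak d=\mathfrak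 d_o\cdot\mathfrak d$ if $o\in\mathcal E_+(\mathfrak l)$ and $0$ otherwise; extend to $\mathcal D_{\mathfrak l}\otimes\mathscr P$ by $D_o(\mathfrak d\otimes F)=\mathfrak d\otimes D_oF+D_o\mathfrak d\otimes F$ and set $\partial_i(\mathfrak d\otimes F)=\mathfrak d\otimes\partial_iF+\sum_{o}D_o\mathfrak d\otimes F\,\partial_i\mathfrak X_o$. $\partial^k=\prod_i\partial_i^{k_i}$, and $\binom{k}{\ell}=\prod_i\binom{k_i}{\ell_i}$ (zero unless $\ell\le k$ componentwise). *)

theory Defs
  imports "HOL-Analysis.Analysis"
begin

text \<open>Multi-indices in N^(d+1) are functions 'i => nat on a finite index type 'i with
  CARD('i) = d+1.  Labels form a finite type 'l.  The index set E = L x N^(d+1).\<close>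

type_synonym ('l, 'i) idx = "'l \<times> ('i \<Rightarrow> nat)"
type_synonym ('l, 'i) val = "('l, 'i) idx \<Rightarrow> real"   \<comment> \<open>valuations of the indeterminates\<close>
type_synonym ('l, 'i) fn = "('l, 'i) val \<Rightarrow> real"    \<comment> \<open>elements of P\<close>
type_synonym ('l, 'i) dfn = "(('l, 'i) idx \<Rightarrow> nat) \<Rightarrow> ('l, 'i) fn"
  \<comment> \<open>elements of D_l (x) P: coefficient of the monomial d^alpha\<close>

definition pd :: "('l, 'i) idx \<Rightarrow> ('l, 'i) fn \<Rightarrow> ('l, 'i) fn" where
  "pd e F = (\<lambda>x. deriv (\<lambda>s. F (x(e := s))) (x e))"

fun iter_pd :: "('l, 'i) idx list \<Rightarrow> ('l, 'i) fn \<Rightarrow> ('l, 'i) fn" where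
  "iter_pd [] F = F"
| "iter_pd (e # es) F = pd e (iter_pd es F)"

definition depends_only :: "('l, 'i) idx set \<Rightarrow> ('l, 'i) fn \<Rightarrow> bool" where
  "depends_only S F \<longleftrightarrow> (\<forall>x y. (\<forall>e\<in>S. x e = y e) \<longrightarrow> F x = F y)"

definition smooth_fn :: "('l, 'i) fn \<Rightarrow> bool" where
  "smooth_fn F \<longleftrightarrow> (\<exists>S. finite S \<and> depends_only S F \<and>
     (\<forall>es. continuous_on UNIV (iter_pd es F) \<and>
           (\<forall>e x. (\<lambda>s. iter_pd es F (x(e := s))) differentiable (at (x e)))))"

text \<open>shift: partial_i X_(t,p) = X_(t,p+e_i)\<close>
definition shift :: "'i \<Rightarrow> ('l, 'i) idx \<Rightarrow> ('l, 'i) idx" where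
  "shift i e = (fst e, (snd e)(i := snd e i + 1))"

text \<open>partial_i F = sum_o partial_i X_o * D_o F  (finite sum over the e with D_o F nonzero)\<close>
definition pdx :: "'i \<Rightarrow> ('l, 'i) fn \<Rightarrow> ('l, 'i) fn" where
  "pdx i F = (\<lambda>x. \<Sum>e\<in>{e. pd e F \<noteq> (\<lambda>_. 0)}. x (shift i e) * pd e F x)"

text \<open>exponents alpha of nonzero monomials d^alpha in D_l (E = E_+(l), kstar = k_star)\<close>
definition validD :: "('l, 'i) idx set \<Rightarrow> nat \<Rightarrow> (('l, 'i) idx \<Rightarrow> nat) \<Rightarrow> bool" where
  "validD E kstar \<alpha> \<longleftrightarrow> (\<forall>e. e \<notin> E \<longrightarrow> \<alpha> e = 0) \<and> (\<forall>e. \<alpha> e \<le> kstar)"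

definition DP :: "('l, 'i) idx set \<Rightarrow> nat \<Rightarrow> ('l, 'i) dfn set" where
  "DP E kstar = {Fh. \<forall>\<alpha>. (validD E kstar \<alpha> \<longrightarrow> smooth_fn (Fh \<alpha>)) \<and>
                          (\<not> validD E kstar \<alpha> \<longrightarrow> Fh \<alpha> = (\<lambda>_. 0))}"

text \<open>D_o on D_l (x) P: D_o(d (x) F) = d (x) D_o F + d_o d (x) F\<close>
definition Dhat :: "('l, 'i) idx set \<Rightarrow> nat \<Rightarrow> ('l, 'i) idx \<Rightarrow> ('l, 'i) dfn \<Rightarrow> ('l, 'i) dfn" where
  "Dhat E kstar e Fh = (\<lambda>\<alpha>. if validD E kstar \<alpha> then
      (\<lambda>x. pd e (Fh \<alpha>) x +
            (if e \<in> E \<and> 1 \<le> \<alpha> e then Fh (\<alpha>(e := \<alpha> e - 1)) x else 0))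
    else (\<lambda>_. 0))"

text \<open>partial_i on D_l (x) P:
  partial_i(d (x) F) = d (x) partial_i F + sum_o D_o d (x) F partial_i X_o\<close>
definition dhat :: "('l, 'i) idx set \<Rightarrow> nat \<Rightarrow> 'i \<Rightarrow> ('l, 'i) dfn \<Rightarrow> ('l, 'i) dfn" where
  "dhat E kstar i Fh = (\<lambda>\<alpha>. if validD E kstar \<alpha> then
      (\<lambda>x. pdx i (Fh \<alpha>) x +
            (\<Sum>e\<in>E. if 1 \<le> \<alpha> e then Fh (\<alpha>(e := \<alpha> e - 1)) x * x (shift i e) else 0))
    else (\<lambda>_. 0))"

definition dpow :: "('l, 'i::{finite,linorder}) idx set \<Rightarrow> nat \<Rightarrow> ('i \<Rightarrow> nat)
                    \<Rightarrow> ('l, 'i) dfn \<Rightarrow> ('l, 'i) dfn" where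
  "dpow E kstar k Fh = fold (\<lambda>i G. (dhat E kstar i ^^ k i) G) (sorted_list_of_set UNIV) Fh"

end

theory Submission
  imports Defs "HOL-Library.Function_Algebras"
begin

text \<open>Both sides are linear in F, and the identity follows from one commutation relation,
  D(t,q) \<partial>_i = \<partial>_i D(t,q) + D(t,q - e_i), where the last term is absent if q_i = 0.
  On the factor P it comes from the symmetry of second partial derivatives together with
  \<partial>_i X_o = X_(o+e_i); on the factor D_l it holds because the monomials d_o commute.
  Iterating it like the Leibniz rule gives
  D(t,p) \<partial>_i^n = \<Sum>_j (n choose j) \<partial>_i^(n-j) D(t,p - j e_i),
  and applying this to one coordinate after the other produces the coefficients
  \<Prod>_i (k_i choose l_i).\<close>

definition partially_differentiable :: "('l, 'i) fn \<Rightarrow> bool" where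
  "partially_differentiable F \<longleftrightarrow> (\<forall>e x. (\<lambda>s. F (x(e := s))) differentiable (at (x e)))"

lemma partially_differentiableI:
  assumes "\<And>x e. \<exists>D. ((\<lambda>s. F (x(e := s))) has_real_derivative D) (at (x e))"
  shows "partially_differentiable F"
  unfolding partially_differentiable_def using assms real_differentiable_def by blast

lemma pd_has_real_derivative:
  assumes "partially_differentiable F"
  shows "((\<lambda>s. F (x(e := s))) has_real_derivative pd e F (x(e := s0))) (at s0)"
proof -
  have "(\<lambda>s. F ((x(e := s0))(e := s))) differentiable (at ((x(e := s0)) e))"
    using assms unfolding partially_differentiable_def by blast
  then have "(\<lambda>s. F (x(e := s))) differentiable (at s0)"
    by simp
  then show ?thesis
    unfolding pd_def by (simp add: DERIV_deriv_iff_real_differentiable)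
qed

lemma pd_eqI:
  assumes "\<And>x. ((\<lambda>s. F (x(e := s))) has_real_derivative g x) (at (x e))"
  shows "pd e F = g"
  unfolding pd_def using assms DERIV_imp_deriv by (intro ext) blast

lemma pd_const: "pd e (\<lambda>_. c) = (\<lambda>_. 0)"
  by (rule pd_eqI) simp

lemma pd_eq_0_if_depends_only:
  assumes "depends_only S F" "e \<notin> S"
  shows "pd e F = (\<lambda>_. 0)"
proof (rule pd_eqI)
  fix x
  have "\<forall>e'\<in>S. (x(e := s)) e' = x e'" for s :: real
    using assms(2) by auto
  then have "(\<lambda>s. F (x(e := s))) = (\<lambda>s. F x)"
    using assms(1) unfolding depends_only_def by blast
  then show "((\<lambda>s. F (x(e := s))) has_real_derivative 0) (at (x e))"
    by simp
qed

lemma depends_only_pd: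
  assumes "depends_only S F"
  shows "depends_only S (pd e F)"
proof (cases "e \<in> S")
  case True
  show ?thesis
    unfolding depends_only_def
  proof (intro allI impI)
    fix x y :: "('a, 'b) val"
    assume xy: "\<forall>e\<in>S. x e = y e"
    then have "\<forall>e'\<in>S. (x(e := s)) e' = (y(e := s)) e'" for s
      by auto
    then have "(\<lambda>s. F (x(e := s))) = (\<lambda>s. F (y(e := s)))"
      using assms unfolding depends_only_def by blast
    moreover have "x e = y e"
      using xy True by blast
    ultimately show "pd e F x = pd e F y"
      unfolding pd_def by simp
  qed
next
  case False
  then show ?thesis
    using pd_eq_0_if_depends_only[OF assms] unfolding depends_only_def by simp
qed

lemma iter_pd_snoc: "iter_pd (es @ [e]) F = iter_pd es (pd e F)"
  by (induction es) auto

lemma smooth_fn_depends_only_finite: "smooth_fn F \<Longrightarrow> \<exists>S. finite S \<and> depends_only S F"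
  unfolding smooth_fn_def by blast

lemma smooth_fn_continuous:
  assumes "smooth_fn F"
  shows "continuous_on UNIV F"
proof -
  have "continuous_on UNIV (iter_pd [] F)"
    using assms unfolding smooth_fn_def by blast
  then show ?thesis
    by simp
qed

lemma smooth_fn_partially_differentiable:
  assumes "smooth_fn F"
  shows "partially_differentiable F"
proof -
  have "\<forall>e x. (\<lambda>s. iter_pd [] F (x(e := s))) differentiable (at (x e))"
    using assms unfolding smooth_fn_def by blast
  then show ?thesis
    unfolding partially_differentiable_def by simp
qed

lemma smooth_fn_pd:
  assumes "smooth_fn F"
  shows "smooth_fn (pd e F)"
proof -
  obtain S where S: "finite S" "depends_only S F"
    "\<And>es. continuous_on UNIV (iter_pd es F)"
    "\<And>es e x. (\<lambda>s. iter_pd es F (x(e := s))) differentiable (at (x e))"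
    using assms unfolding smooth_fn_def by blast
  show ?thesis
    unfolding smooth_fn_def
  proof (intro exI[of _ S] conjI allI)
    fix es e' x
    show "continuous_on UNIV (iter_pd es (pd e F))"
      using S(3)[of "es @ [e]"] by (simp add: iter_pd_snoc)
    show "(\<lambda>s. iter_pd es (pd e F) (x(e' := s))) differentiable at (x e')"
      using S(4)[of "es @ [e]"] by (simp add: iter_pd_snoc)
  qed (use S(1) depends_only_pd[OF S(2)] in auto)
qed

lemma smooth_fn_coinduct:
  assumes "F \<in> X" "\<exists>S. finite S \<and> depends_only S F"
    and closed: "\<And>G. G \<in> X \<Longrightarrow>
      continuous_on UNIV G \<and> partially_differentiable G \<and> (\<forall>e. pd e G \<in> X)"
  shows "smooth_fn F"
proof -
  have X: "iter_pd es F \<in> X" for es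
    using assms(1) closed by (induction es) auto
  obtain S where "finite S" "depends_only S F"
    using assms(2) by blast
  then show ?thesis
    unfolding smooth_fn_def using closed[OF X] unfolding partially_differentiable_def by blast
qed

lemma smooth_fn_has_real_derivative:
  "smooth_fn F \<Longrightarrow> ((\<lambda>s. F (x(e := s))) has_real_derivative pd e F (x(e := s0))) (at s0)"
  by (rule pd_has_real_derivative[OF smooth_fn_partially_differentiable])

lemma smooth_fn_has_real_derivative_at:
  "smooth_fn F \<Longrightarrow> ((\<lambda>s. F (x(e := s))) has_real_derivative pd e F x) (at (x e))"
  using smooth_fn_has_real_derivative[of F x e "x e"] by simp

lemma smooth_fn_const: "smooth_fn (\<lambda>_. c)"
  by (rule smooth_fn_coinduct[of _ "{\<lambda>_. c, \<lambda>_. 0}"])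
     (auto simp: pd_const depends_only_def partially_differentiable_def)

lemma smooth_fn_add:
  assumes "smooth_fn F" "smooth_fn G"
  shows "smooth_fn (\<lambda>x. F x + G x)"
proof (rule smooth_fn_coinduct[of _ "{\<lambda>x. F x + G x | F G. smooth_fn F \<and> smooth_fn G}"])
  show "(\<lambda>x. F x + G x) \<in> {\<lambda>x. F x + G x | F G. smooth_fn F \<and> smooth_fn G}"
    using assms by blast
  obtain S T where "finite S" "depends_only S F" "finite T" "depends_only T G"
    using assms smooth_fn_depends_only_finite by metis
  moreover have "depends_only (S \<union> T) (\<lambda>x. F x + G x)"
    using \<open>depends_only S F\<close> \<open>depends_only T G\<close> unfolding depends_only_def by (metis UnCI)
  ultimately show "\<exists>S. finite S \<and> depends_only S (\<lambda>x. F x + G x)"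
    by blast
next
  fix H
  assume "H \<in> {\<lambda>x. F x + G x | F G. smooth_fn F \<and> smooth_fn G}"
  then obtain F G where H: "H = (\<lambda>x. F x + G x)" "smooth_fn F" "smooth_fn G"
    by blast
  have der: "((\<lambda>s. H (x(e := s))) has_real_derivative pd e F x + pd e G x) (at (x e))" for x e
    unfolding H(1) by (intro DERIV_add smooth_fn_has_real_derivative_at H)
  have "pd e H = (\<lambda>x. pd e F x + pd e G x)" for e
    by (rule pd_eqI[OF der])
  then have "pd e H \<in> {\<lambda>x. F x + G x | F G. smooth_fn F \<and> smooth_fn G}" for e
    using H(2,3) smooth_fn_pd by blast
  moreover have "continuous_on UNIV H"
    unfolding H(1) by (intro continuous_on_add smooth_fn_continuous H(2,3))
  ultimately show "continuous_on UNIV H \<and> partially_differentiable H \<and>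
      (\<forall>e. pd e H \<in> {\<lambda>x. F x + G x | F G. smooth_fn F \<and> smooth_fn G})"
    using der by (blast intro: partially_differentiableI)
qed

lemma smooth_fn_sum:
  assumes "\<And>j. j \<in> J \<Longrightarrow> smooth_fn (H j)"
  shows "smooth_fn (\<lambda>x. \<Sum>j\<in>J. H j x)"
proof (cases "finite J")
  case True
  then show ?thesis
    using assms by (induction J rule: finite_induct) (auto simp: smooth_fn_const intro!: smooth_fn_add)
qed (simp add: smooth_fn_const)

lemma smooth_fn_if: "(b \<Longrightarrow> smooth_fn F) \<Longrightarrow> smooth_fn (\<lambda>x. if b then F x else 0)"
  using smooth_fn_const[of 0] by (cases b) auto

lemma DERIV_fun_upd_apply:
  "((\<lambda>s. (x(e := s)) c) has_real_derivative (if c = e then 1 else 0)) (at s0)"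
  by (cases "c = e") auto

lemma pd_mult_coord:
  assumes "smooth_fn F"
  shows "pd e (\<lambda>x. F x * x c) = (\<lambda>x. pd e F x * x c + (if c = e then F x else 0))"
proof (rule pd_eqI)
  fix x :: "('a, 'b) val"
  have "((\<lambda>s. F (x(e := s)) * (x(e := s)) c) has_real_derivative
      pd e F x * (x(e := x e)) c + (if c = e then 1 else 0) * F (x(e := x e))) (at (x e))"
    by (intro DERIV_mult smooth_fn_has_real_derivative_at assms DERIV_fun_upd_apply)
  then show "((\<lambda>s. F (x(e := s)) * (x(e := s)) c) has_real_derivative
      pd e F x * x c + (if c = e then F x else 0)) (at (x e))"
    by (rule DERIV_cong) simp
qed

lemma smooth_fn_mult_coord:
  assumes "smooth_fn F"
  shows "smooth_fn (\<lambda>x. F x * x c)"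
proof (rule smooth_fn_coinduct[of _ "{\<lambda>x. F x * x c + G x | F G. smooth_fn F \<and> smooth_fn G}"])
  show "(\<lambda>x. F x * x c) \<in> {\<lambda>x. F x * x c + G x | F G. smooth_fn F \<and> smooth_fn G}"
    using assms smooth_fn_const[of 0] by force
  obtain S where "finite S" "depends_only S F"
    using assms smooth_fn_depends_only_finite by metis
  then show "\<exists>S. finite S \<and> depends_only S (\<lambda>x. F x * x c)"
    by (intro exI[of _ "insert c S"]) (auto simp: depends_only_def)
next
  fix H
  assume "H \<in> {\<lambda>x. F x * x c + G x | F G. smooth_fn F \<and> smooth_fn G}"
  then obtain F G where H: "H = (\<lambda>x. F x * x c + G x)" "smooth_fn F" "smooth_fn G"
    by blast
  have der: "((\<lambda>s. H (x(e := s))) has_real_derivative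
      pd e F x * x c + ((if c = e then F x else 0) + pd e G x)) (at (x e))" for x e
  proof -
    have "((\<lambda>s. F (x(e := s)) * (x(e := s)) c + G (x(e := s))) has_real_derivative
        pd e F x * (x(e := x e)) c + (if c = e then 1 else 0) * F (x(e := x e)) + pd e G x) (at (x e))"
      by (intro DERIV_add DERIV_mult smooth_fn_has_real_derivative_at H DERIV_fun_upd_apply)
    then show ?thesis
      unfolding H(1) by (rule DERIV_cong) simp
  qed
  have "pd e H \<in> {\<lambda>x. F x * x c + G x | F G. smooth_fn F \<and> smooth_fn G}" for e
    unfolding pd_eqI[OF der]
    by (intro CollectI exI[of _ "pd e F"] exI[of _ "\<lambda>x. (if c = e then F x else 0) + pd e G x"])
       (simp add: smooth_fn_pd H smooth_fn_add smooth_fn_if)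
  moreover have "continuous_on UNIV H"
    unfolding H(1) by (intro continuous_on_add continuous_on_mult continuous_on_product_coordinates
        smooth_fn_continuous H(2,3))
  ultimately show "continuous_on UNIV H \<and> partially_differentiable H \<and>
      (\<forall>e. pd e H \<in> {\<lambda>x. F x * x c + G x | F G. smooth_fn F \<and> smooth_fn G})"
    using der by (blast intro: partially_differentiableI)
qed

section \<open>Symmetry of second partial derivatives\<close>

lemma second_difference_mvt:
  fixes f fs fu fsu fus :: "real \<Rightarrow> real \<Rightarrow> real"
  assumes fs: "\<And>s u. ((\<lambda>s. f s u) has_real_derivative fs s u) (at s)"
    and fu: "\<And>s u. ((\<lambda>u. f s u) has_real_derivative fu s u) (at u)"
    and fsu: "\<And>s u. ((\<lambda>u. fs s u) has_real_derivative fsu s u) (at u)"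
    and fus: "\<And>s u. ((\<lambda>s. fu s u) has_real_derivative fus s u) (at s)"
    and h: "h > 0"
  obtains s u s' u' where "s \<in> {s0<..<s0 + h}" "u \<in> {u0<..<u0 + h}"
    "s' \<in> {s0<..<s0 + h}" "u' \<in> {u0<..<u0 + h}" "fsu s u = fus s' u'"
proof -
  define \<Delta> where "\<Delta> = f (s0 + h) (u0 + h) - f (s0 + h) u0 - f s0 (u0 + h) + f s0 u0"
  have mvt: "\<exists>z \<in> {a<..<a + h}. g (a + h) - g a = h * g' z"
    if "\<And>z. (g has_real_derivative g' z) (at z)" for g g' a
    using MVT2[of a "a + h" g g'] that h by auto
  obtain s where s: "s \<in> {s0<..<s0 + h}"
    and "(f (s0 + h) (u0 + h) - f (s0 + h) u0) - (f s0 (u0 + h) - f s0 u0)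
      = h * (fs s (u0 + h) - fs s u0)"
    using mvt[OF DERIV_diff[OF fs[where u = "u0 + h"] fs[where u = u0]], of s0] by blast
  then have \<Delta>_s: "\<Delta> = h * (fs s (u0 + h) - fs s u0)"
    unfolding \<Delta>_def by simp
  obtain u where u: "u \<in> {u0<..<u0 + h}" and "fs s (u0 + h) - fs s u0 = h * fsu s u"
    using mvt[OF fsu[of s], of u0] by blast
  with \<Delta>_s have \<Delta>_su: "\<Delta> = h * (h * fsu s u)"
    by simp
  obtain u' where u': "u' \<in> {u0<..<u0 + h}"
    and "(f (s0 + h) (u0 + h) - f s0 (u0 + h)) - (f (s0 + h) u0 - f s0 u0)
      = h * (fu (s0 + h) u' - fu s0 u')"
    using mvt[OF DERIV_diff[OF fu[of "s0 + h"] fu[of s0]], of u0] by blast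
  then have \<Delta>_u': "\<Delta> = h * (fu (s0 + h) u' - fu s0 u')"
    unfolding \<Delta>_def by simp
  obtain s' where s': "s' \<in> {s0<..<s0 + h}" and "fu (s0 + h) u' - fu s0 u' = h * fus s' u'"
    using mvt[OF fus[where u = u'], of s0] by blast
  with \<Delta>_u' \<Delta>_su have "h * (h * fsu s u) = h * (h * fus s' u')"
    by simp
  then show thesis
    using that s u s' u' h by simp
qed

lemma mixed_partials_commute:
  fixes f fs fu fsu fus :: "real \<Rightarrow> real \<Rightarrow> real"
  assumes "\<And>s u. ((\<lambda>s. f s u) has_real_derivative fs s u) (at s)"
    and "\<And>s u. ((\<lambda>u. f s u) has_real_derivative fu s u) (at u)"
    and "\<And>s u. ((\<lambda>u. fs s u) has_real_derivative fsu s u) (at u)"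
    and "\<And>s u. ((\<lambda>s. fu s u) has_real_derivative fus s u) (at s)"
    and cont_su: "isCont (case_prod fsu) (s0, u0)"
    and cont_us: "isCont (case_prod fus) (s0, u0)"
  shows "fsu s0 u0 = fus s0 u0"
proof (rule ccontr)
  assume "fsu s0 u0 \<noteq> fus s0 u0"
  then have \<epsilon>: "\<bar>fsu s0 u0 - fus s0 u0\<bar> / 2 > 0"
    by simp
  obtain d1 where d1: "d1 > 0" "\<And>z. dist z (s0, u0) < d1 \<Longrightarrow>
      dist (case_prod fsu z) (case_prod fsu (s0, u0)) < \<bar>fsu s0 u0 - fus s0 u0\<bar> / 2"
    using cont_su[unfolded continuous_at_eps_delta, rule_format, OF \<epsilon>] by blast
  obtain d2 where d2: "d2 > 0" "\<And>z. dist z (s0, u0) < d2 \<Longrightarrow>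
      dist (case_prod fus z) (case_prod fus (s0, u0)) < \<bar>fsu s0 u0 - fus s0 u0\<bar> / 2"
    using cont_us[unfolded continuous_at_eps_delta, rule_format, OF \<epsilon>] by blast
  define h where "h = min d1 d2 / 2"
  have "h > 0"
    using d1 d2 unfolding h_def by simp
  have near: "dist (s, u) (s0, u0) < min d1 d2" if "s \<in> {s0<..<s0 + h}" "u \<in> {u0<..<u0 + h}" for s u
  proof -
    have "dist (s, u) (s0, u0) \<le> \<bar>s - s0\<bar> + \<bar>u - u0\<bar>"
      unfolding dist_Pair_Pair dist_real_def power2_abs by (rule sqrt_sum_squares_le_sum_abs)
    also have "\<dots> < min d1 d2"
      using that unfolding h_def by (auto simp: min_def)
    finally show ?thesis .
  qed
  obtain s u s' u' where "s \<in> {s0<..<s0 + h}" "u \<in> {u0<..<u0 + h}"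
    "s' \<in> {s0<..<s0 + h}" "u' \<in> {u0<..<u0 + h}" and eq: "fsu s u = fus s' u'"
    using second_difference_mvt[OF assms(1-4) \<open>h > 0\<close>] by blast
  then have "\<bar>fsu s u - fsu s0 u0\<bar> < \<bar>fsu s0 u0 - fus s0 u0\<bar> / 2"
    "\<bar>fus s' u' - fus s0 u0\<bar> < \<bar>fsu s0 u0 - fus s0 u0\<bar> / 2"
    using d1(2)[of "(s, u)"] d2(2)[of "(s', u')"] near unfolding dist_real_def by auto
  then show False
    using eq by (simp add: abs_if split: if_splits)
qed

lemma pd_commute:
  assumes F: "smooth_fn F"
  shows "pd a (pd b F) = pd b (pd a F)"
proof (rule ext)
  fix x :: "('a, 'b) val"
  show "pd a (pd b F) x = pd b (pd a F) x"
  proof (cases "a = b")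
    case False
    define Y where "Y s u = x(a := s, b := u)" for s u
    have Y_upd_a: "(Y s' u)(a := s) = Y s u" and Y_upd_b: "(Y s u')(b := u) = Y s u" for s s' u u'
      unfolding Y_def using False by (simp_all add: fun_upd_twist)
    have cont_Y: "continuous_on UNIV (case_prod Y)"
    proof (rule continuous_on_coordinatewise_then_product)
      fix c
      show "continuous_on UNIV (\<lambda>z. case_prod Y z c)"
        by (cases "c = b"; cases "c = a") (simp_all add: Y_def case_prod_beta continuous_on_fst continuous_on_snd)
    qed
    have isCont_Y: "isCont (case_prod (\<lambda>s u. G (Y s u))) (x a, x b)" if "smooth_fn G" for G
    proof -
      have "continuous_on UNIV (G \<circ> case_prod Y)"
        using continuous_on_compose[OF cont_Y continuous_on_subset[OF smooth_fn_continuous[OF that]]]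
        by blast
      then show ?thesis
        by (simp add: continuous_on_eq_continuous_at case_prod_beta' o_def)
    qed
    have der_a: "((\<lambda>s. G (Y s u)) has_real_derivative pd a G (Y s u)) (at s)"
      and der_b: "((\<lambda>u. G (Y s u)) has_real_derivative pd b G (Y s u)) (at u)"
      if "smooth_fn G" for G s u
      using smooth_fn_has_real_derivative[OF that, of "Y s u" a s]
        smooth_fn_has_real_derivative[OF that, of "Y s u" b u]
      unfolding Y_upd_a Y_upd_b by simp_all
    have "pd b (pd a F) (Y (x a) (x b)) = pd a (pd b F) (Y (x a) (x b))"
      by (rule mixed_partials_commute[where f = "\<lambda>s u. F (Y s u)"
            and fs = "\<lambda>s u. pd a F (Y s u)" and fu = "\<lambda>s u. pd b F (Y s u)"
            and fsu = "\<lambda>s u. pd b (pd a F) (Y s u)" and fus = "\<lambda>s u. pd a (pd b F) (Y s u)"])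
        (intro der_a der_b isCont_Y smooth_fn_pd F)+
    then show ?thesis
      by (simp add: Y_def)
  qed simp
qed

lemma pd_lincomb:
  assumes "\<And>j. j \<in> J \<Longrightarrow> smooth_fn (H j)"
  shows "pd e (\<lambda>x. \<Sum>j\<in>J. c j * H j x) = (\<lambda>x. \<Sum>j\<in>J. c j * pd e (H j) x)"
  by (intro pd_eqI DERIV_sum DERIV_cmult smooth_fn_has_real_derivative_at assms)

lemma pd_sum:
  assumes "\<And>j. j \<in> J \<Longrightarrow> smooth_fn (H j)"
  shows "pd e (\<lambda>x. \<Sum>j\<in>J. H j x) = (\<lambda>x. \<Sum>j\<in>J. pd e (H j) x)"
  using pd_lincomb[of J H e "\<lambda>_. 1"] assms by simp

lemma pd_add:
  assumes "smooth_fn F" "smooth_fn G"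
  shows "pd e (\<lambda>x. F x + G x) = (\<lambda>x. pd e F x + pd e G x)"
  by (intro pd_eqI DERIV_add smooth_fn_has_real_derivative_at assms)

lemma pd_if: "pd e (\<lambda>x. if b then F x else 0) = (\<lambda>x. if b then pd e F x else 0)"
  by (cases b) (simp_all add: pd_const)

lemma pdx_eq_sum:
  assumes "finite T" "\<And>e. e \<notin> T \<Longrightarrow> pd e F = (\<lambda>_. 0)"
  shows "pdx i F x = (\<Sum>e\<in>T. x (shift i e) * pd e F x)"
  unfolding pdx_def using assms by (intro sum.mono_neutral_left) auto

lemma pdx_eq_sum_depends_only:
  assumes "finite S" "depends_only S F"
  shows "pdx i F x = (\<Sum>e\<in>S. x (shift i e) * pd e F x)"
  using assms pd_eq_0_if_depends_only by (intro pdx_eq_sum) auto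

lemma smooth_fn_pdx:
  assumes "smooth_fn F"
  shows "smooth_fn (pdx i F)"
proof -
  obtain S where S: "finite S" "depends_only S F"
    using smooth_fn_depends_only_finite[OF assms] by blast
  have "smooth_fn (\<lambda>x. \<Sum>e\<in>S. pd e F x * x (shift i e))"
    by (intro smooth_fn_sum smooth_fn_mult_coord smooth_fn_pd assms)
  moreover have "pdx i F = (\<lambda>x. \<Sum>e\<in>S. pd e F x * x (shift i e))"
    using pdx_eq_sum_depends_only[OF S] by (simp add: fun_eq_iff mult.commute)
  ultimately show ?thesis
    by simp
qed

lemma pdx_lincomb:
  assumes J: "finite J" and H: "\<And>j. j \<in> J \<Longrightarrow> smooth_fn (H j)"
  shows "pdx i (\<lambda>x. \<Sum>j\<in>J. c j * H j x) x = (\<Sum>j\<in>J. c j * pdx i (H j) x)"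
proof -
  have "\<forall>j\<in>J. \<exists>S. finite S \<and> depends_only S (H j)"
    using H smooth_fn_depends_only_finite by blast
  then obtain S where S: "\<And>j. j \<in> J \<Longrightarrow> finite (S j) \<and> depends_only (S j) (H j)"
    by metis
  define T where "T = (\<Union>j\<in>J. S j)"
  have T: "finite T"
    unfolding T_def using J S by auto
  have out: "pd e (H j) = (\<lambda>_. 0)" if "e \<notin> T" "j \<in> J" for e j
    using pd_eq_0_if_depends_only[of "S j" "H j" e] S that unfolding T_def by blast
  have "pdx i (\<lambda>x. \<Sum>j\<in>J. c j * H j x) x
      = (\<Sum>e\<in>T. x (shift i e) * (\<Sum>j\<in>J. c j * pd e (H j) x))"
    using out by (subst pdx_eq_sum[OF T]) (simp_all add: pd_lincomb[OF H])
  also have "\<dots> = (\<Sum>j\<in>J. c j * (\<Sum>e\<in>T. x (shift i e) * pd e (H j) x))"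
    by (simp add: sum_distrib_left sum.swap[of _ T] algebra_simps)
  also have "\<dots> = (\<Sum>j\<in>J. c j * pdx i (H j) x)"
    using out by (intro sum.cong refl arg_cong2[where f = "(*)"] pdx_eq_sum[OF T, symmetric]) auto
  finally show ?thesis .
qed

lemma pdx_add:
  assumes "smooth_fn F" "smooth_fn G"
  shows "pdx i (\<lambda>x. F x + G x) x = pdx i F x + pdx i G x"
  using pdx_lincomb[of "UNIV :: bool set" "\<lambda>b. if b then G else F" i "\<lambda>_. 1" x] assms
  by (simp add: UNIV_bool)

lemma pdx_if: "pdx i (\<lambda>x. if b then F x else 0) x = (if b then pdx i F x else 0)"
  by (cases b) (simp_all add: pdx_def pd_const)

definition unshift :: "'i \<Rightarrow> ('l, 'i) idx \<Rightarrow> ('l, 'i) idx" where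
  "unshift i q = (fst q, (snd q)(i := snd q i - 1))"

lemma shift_eq_iff: "shift i e = q \<longleftrightarrow> 1 \<le> snd q i \<and> e = unshift i q"
  unfolding shift_def unshift_def by (cases e; cases q) (auto simp: fun_eq_iff)

lemma pd_pdx:
  assumes F: "smooth_fn F"
  shows "pd q (pdx i F) = (\<lambda>x. pdx i (pd q F) x + (if 1 \<le> snd q i then pd (unshift i q) F x else 0))"
proof (rule pd_eqI)
  fix x
  obtain S where S: "finite S" "depends_only S F"
    using smooth_fn_depends_only_finite[OF F] by blast
  define T where "T = insert (unshift i q) S"
  have T: "finite T" "depends_only T F"
    using S unfolding T_def depends_only_def by auto
  have "((\<lambda>s. \<Sum>e\<in>T. (x(q := s)) (shift i e) * pd e F (x(q := s))) has_real_derivative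
      (\<Sum>e\<in>T. (x(q := x q)) (shift i e) * pd q (pd e F) x
        + (if shift i e = q then 1 else 0) * pd e F (x(q := x q)))) (at (x q))"
    by (intro DERIV_sum DERIV_mult' DERIV_fun_upd_apply smooth_fn_has_real_derivative_at smooth_fn_pd F)
  moreover have "(\<Sum>e\<in>T. (x(q := x q)) (shift i e) * pd q (pd e F) x
        + (if shift i e = q then 1 else 0) * pd e F (x(q := x q)))
      = (\<Sum>e\<in>T. x (shift i e) * pd e (pd q F) x)
        + (\<Sum>e\<in>T. if e = unshift i q \<and> 1 \<le> snd q i then pd e F x else 0)"
    unfolding sum.distrib[symmetric] using pd_commute[OF F, of q]
    by (intro sum.cong refl) (auto simp: shift_eq_iff)
  moreover have "(\<Sum>e\<in>T. if e = unshift i q \<and> 1 \<le> snd q i then pd e F x else 0)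
      = (if 1 \<le> snd q i then pd (unshift i q) F x else 0)"
    using T(1) by (simp add: T_def if_distrib sum.delta)
  ultimately show "((\<lambda>s. pdx i F (x(q := s))) has_real_derivative
      pdx i (pd q F) x + (if 1 \<le> snd q i then pd (unshift i q) F x else 0)) (at (x q))"
    using pdx_eq_sum_depends_only[OF T] pdx_eq_sum_depends_only[OF T(1) depends_only_pd[OF T(2)]]
    by simp
qed

section \<open>The commutation relation on D_l \<otimes> P\<close>

definition smooth_dfn :: "('l, 'i) dfn \<Rightarrow> bool" where
  "smooth_dfn G \<longleftrightarrow> (\<forall>\<alpha>. smooth_fn (G \<alpha>))"

lemma DP_imp_smooth_dfn:
  assumes "G \<in> DP E ks"
  shows "smooth_dfn G"
  unfolding smooth_dfn_def
proof
  fix \<alpha>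
  show "smooth_fn (G \<alpha>)"
    using assms smooth_fn_const[of 0] unfolding DP_def by (cases "validD E ks \<alpha>") auto
qed

lemma smooth_dfn_zero: "smooth_dfn (\<lambda>\<alpha> x. 0)"
  unfolding smooth_dfn_def by (simp add: smooth_fn_const)

lemma validD_lower:
  assumes "validD E ks \<alpha>"
  shows "validD E ks (\<alpha>(e := \<alpha> e - 1))"
  using assms unfolding validD_def by (auto intro: le_trans[OF diff_le_self])

lemma smooth_dfn_Dhat:
  assumes "smooth_dfn G"
  shows "smooth_dfn (Dhat E ks q G)"
  unfolding smooth_dfn_def
proof
  fix \<alpha>
  show "smooth_fn (Dhat E ks q G \<alpha>)"
    using assms unfolding smooth_dfn_def Dhat_def
    by (auto intro!: smooth_fn_add smooth_fn_if smooth_fn_pd simp: smooth_fn_const)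
qed

lemma smooth_dfn_dhat:
  assumes "smooth_dfn G"
  shows "smooth_dfn (dhat E ks i G)"
  unfolding smooth_dfn_def
proof
  fix \<alpha>
  show "smooth_fn (dhat E ks i G \<alpha>)"
    using assms unfolding smooth_dfn_def dhat_def
    by (auto intro!: smooth_fn_add smooth_fn_if smooth_fn_pdx smooth_fn_sum smooth_fn_mult_coord
        simp: smooth_fn_const)
qed

lemma dhat_lincomb:
  assumes J: "finite J" and H: "\<And>j. j \<in> J \<Longrightarrow> smooth_dfn (H j)"
  shows "dhat E ks i (\<lambda>\<alpha> x. \<Sum>j\<in>J. c j * H j \<alpha> x) = (\<lambda>\<alpha> x. \<Sum>j\<in>J. c j * dhat E ks i (H j) \<alpha> x)"
proof (intro ext)
  fix \<alpha> x
  have "pdx i (\<lambda>x. \<Sum>j\<in>J. c j * H j \<alpha> x) x = (\<Sum>j\<in>J. c j * pdx i (H j \<alpha>) x)"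
    using H unfolding smooth_dfn_def by (intro pdx_lincomb J) blast
  moreover have "(\<Sum>e\<in>E. if 1 \<le> \<alpha> e then (\<Sum>j\<in>J. c j * H j (\<alpha>(e := \<alpha> e - 1)) x) * x (shift i e) else 0)
     = (\<Sum>j\<in>J. c j * (\<Sum>e\<in>E. if 1 \<le> \<alpha> e then H j (\<alpha>(e := \<alpha> e - 1)) x * x (shift i e) else 0))"
  proof -
    have "(\<Sum>e\<in>E. if 1 \<le> \<alpha> e then (\<Sum>j\<in>J. c j * H j (\<alpha>(e := \<alpha> e - 1)) x) * x (shift i e) else 0)
      = (\<Sum>e\<in>E. \<Sum>j\<in>J. if 1 \<le> \<alpha> e then c j * (H j (\<alpha>(e := \<alpha> e - 1)) x * x (shift i e)) else 0)"
      by (intro sum.cong refl) (simp add: sum_distrib_left sum_distrib_right mult_ac)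
    also have "\<dots> = (\<Sum>j\<in>J. \<Sum>e\<in>E. if 1 \<le> \<alpha> e then c j * (H j (\<alpha>(e := \<alpha> e - 1)) x * x (shift i e)) else 0)"
      by (rule sum.swap)
    also have "\<dots> = (\<Sum>j\<in>J. c j * (\<Sum>e\<in>E. if 1 \<le> \<alpha> e then H j (\<alpha>(e := \<alpha> e - 1)) x * x (shift i e) else 0))"
      by (auto simp: sum_distrib_left intro!: sum.cong)
    finally show ?thesis .
  qed
  ultimately show "dhat E ks i (\<lambda>\<alpha> x. \<Sum>j\<in>J. c j * H j \<alpha> x) \<alpha> x = (\<Sum>j\<in>J. c j * dhat E ks i (H j) \<alpha> x)"
    unfolding dhat_def by (simp add: sum.distrib sum_distrib_left algebra_simps)
qed

lemma Dhat_valid: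
  "validD E ks \<alpha> \<Longrightarrow>
    Dhat E ks q G \<alpha> = (\<lambda>x. pd q (G \<alpha>) x + (if q \<in> E \<and> 1 \<le> \<alpha> q then G (\<alpha>(q := \<alpha> q - 1)) x else 0))"
  unfolding Dhat_def by simp

lemma dhat_valid:
  "validD E ks \<alpha> \<Longrightarrow>
    dhat E ks i G \<alpha> = (\<lambda>x. pdx i (G \<alpha>) x +
      (\<Sum>e\<in>E. if 1 \<le> \<alpha> e then G (\<alpha>(e := \<alpha> e - 1)) x * x (shift i e) else 0))"
  unfolding dhat_def by simp

lemma sum_if_shift_eq:
  assumes "finite E"
  shows "(\<Sum>e\<in>E. if 1 \<le> \<alpha> e \<and> shift i e = q then g e else 0)
    = (if 1 \<le> snd q i \<and> unshift i q \<in> E \<and> 1 \<le> \<alpha> (unshift i q) then g (unshift i q) else (0::'a::comm_monoid_add))"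
proof -
  have "(\<Sum>e\<in>E. if 1 \<le> \<alpha> e \<and> shift i e = q then g e else 0)
      = (\<Sum>e\<in>E. if e = unshift i q then (if 1 \<le> snd q i \<and> 1 \<le> \<alpha> e then g e else 0) else 0)"
    by (intro sum.cong refl) (auto simp: shift_eq_iff)
  then show ?thesis
    using assms by (simp add: sum.delta)
qed

text \<open>Lowering the exponent \<alpha> at q and then at e, or in the opposite order, gives the same
  monomial: this is the commutativity of d_q and d_e.\<close>

lemma sum_lower_lower_swap:
  "(if q \<in> E \<and> 1 \<le> \<alpha> q then
      (\<Sum>e\<in>E. if 1 \<le> (\<alpha>(q := \<alpha> q - 1)) e
        then g ((\<alpha>(q := \<alpha> q - 1))(e := (\<alpha>(q := \<alpha> q - 1)) e - 1)) e else 0)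
    else 0)
   = (\<Sum>e\<in>E. if 1 \<le> \<alpha> e \<and> q \<in> E \<and> 1 \<le> (\<alpha>(e := \<alpha> e - 1)) q
        then g ((\<alpha>(e := \<alpha> e - 1))(q := (\<alpha>(e := \<alpha> e - 1)) q - 1)) e else (0::'a::comm_monoid_add))"
  (is "(if ?A then (\<Sum>e\<in>E. ?f e) else 0) = (\<Sum>e\<in>E. ?g e)")
proof -
  have "(if ?A then (\<Sum>e\<in>E. ?f e) else 0) = (\<Sum>e\<in>E. if ?A then ?f e else 0)"
    by (cases "q \<in> E"; cases "1 \<le> \<alpha> q") simp_all
  also have "\<dots> = (\<Sum>e\<in>E. ?g e)"
  proof (rule sum.cong[OF refl])
    fix e
    show "(if ?A then ?f e else 0) = ?g e"
      by (cases "e = q") (auto simp: fun_upd_twist)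
  qed
  finally show ?thesis .
qed

text \<open>Differentiating the factor X_(shift i e) of \<partial>_i produces the lowering part of
  D(unshift i q); the Schwarz correction term of pd_pdx supplies its derivative part.\<close>

lemma pd_dhat:
  assumes G: "smooth_dfn G" and E: "finite E" and \<alpha>: "validD E ks \<alpha>"
  shows "pd q (dhat E ks i G \<alpha>) x = pdx i (pd q (G \<alpha>)) x
    + (if 1 \<le> snd q i then Dhat E ks (unshift i q) G \<alpha> x else 0)
    + (\<Sum>e\<in>E. if 1 \<le> \<alpha> e then pd q (G (\<alpha>(e := \<alpha> e - 1))) x * x (shift i e) else 0)"
proof -
  have sm: "smooth_fn (G \<beta>)" for \<beta>
    using G unfolding smooth_dfn_def by blast
  have sm_lower: "smooth_fn (\<lambda>x. if 1 \<le> \<alpha> e then G (\<alpha>(e := \<alpha> e - 1)) x * x (shift i e) else 0)" for e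
    by (intro smooth_fn_if smooth_fn_mult_coord sm)
  have "pd q (dhat E ks i G \<alpha>) x = pd q (pdx i (G \<alpha>)) x
      + pd q (\<lambda>x. \<Sum>e\<in>E. if 1 \<le> \<alpha> e then G (\<alpha>(e := \<alpha> e - 1)) x * x (shift i e) else 0) x"
    unfolding dhat_valid[OF \<alpha>] by (simp only: pd_add[OF smooth_fn_pdx[OF sm] smooth_fn_sum[OF sm_lower]])
  also have "pd q (\<lambda>x. \<Sum>e\<in>E. if 1 \<le> \<alpha> e then G (\<alpha>(e := \<alpha> e - 1)) x * x (shift i e) else 0) x
      = (\<Sum>e\<in>E. if 1 \<le> \<alpha> e then pd q (G (\<alpha>(e := \<alpha> e - 1))) x * x (shift i e) else 0)
        + (\<Sum>e\<in>E. if 1 \<le> \<alpha> e \<and> shift i e = q then G (\<alpha>(e := \<alpha> e - 1)) x else 0)"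
    unfolding pd_sum[OF sm_lower] pd_if pd_mult_coord[OF sm] sum.distrib[symmetric]
    by (intro sum.cong refl) auto
  finally show ?thesis
    unfolding pd_pdx[OF sm] sum_if_shift_eq[OF E] Dhat_valid[OF \<alpha>] by simp
qed

lemma dhat_Dhat_eq:
  assumes G: "smooth_dfn G" and \<alpha>: "validD E ks \<alpha>"
  shows "dhat E ks i (Dhat E ks q G) \<alpha> x = pdx i (pd q (G \<alpha>)) x
    + (if q \<in> E \<and> 1 \<le> \<alpha> q then pdx i (G (\<alpha>(q := \<alpha> q - 1))) x else 0)
    + (\<Sum>e\<in>E. if 1 \<le> \<alpha> e then pd q (G (\<alpha>(e := \<alpha> e - 1))) x * x (shift i e) else 0)
    + (\<Sum>e\<in>E. if 1 \<le> \<alpha> e \<and> q \<in> E \<and> 1 \<le> (\<alpha>(e := \<alpha> e - 1)) q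
        then G ((\<alpha>(e := \<alpha> e - 1))(q := (\<alpha>(e := \<alpha> e - 1)) q - 1)) x * x (shift i e) else 0)"
proof -
  have sm: "smooth_fn (G \<beta>)" for \<beta>
    using G unfolding smooth_dfn_def by blast
  have "pdx i (Dhat E ks q G \<alpha>) x = pdx i (pd q (G \<alpha>)) x
      + (if q \<in> E \<and> 1 \<le> \<alpha> q then pdx i (G (\<alpha>(q := \<alpha> q - 1))) x else 0)"
    unfolding Dhat_valid[OF \<alpha>]
    by (simp add: pdx_add[OF smooth_fn_pd[OF sm] smooth_fn_if[OF sm]] pdx_if)
  moreover have "(\<Sum>e\<in>E. if 1 \<le> \<alpha> e then Dhat E ks q G (\<alpha>(e := \<alpha> e - 1)) x * x (shift i e) else 0)
      = (\<Sum>e\<in>E. if 1 \<le> \<alpha> e then pd q (G (\<alpha>(e := \<alpha> e - 1))) x * x (shift i e) else 0)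
      + (\<Sum>e\<in>E. if 1 \<le> \<alpha> e \<and> q \<in> E \<and> 1 \<le> (\<alpha>(e := \<alpha> e - 1)) q
          then G ((\<alpha>(e := \<alpha> e - 1))(q := (\<alpha>(e := \<alpha> e - 1)) q - 1)) x * x (shift i e) else 0)"
    unfolding sum.distrib[symmetric] Dhat_valid[OF validD_lower[OF \<alpha>]]
    by (intro sum.cong refl) (auto simp: algebra_simps)
  ultimately show ?thesis
    by (simp add: dhat_valid[OF \<alpha>])
qed

lemma Dhat_dhat_commute:
  assumes G: "smooth_dfn G" and E: "finite E"
  shows "Dhat E ks q (dhat E ks i G) \<alpha> x = dhat E ks i (Dhat E ks q G) \<alpha> x
      + (if 1 \<le> snd q i then Dhat E ks (unshift i q) G \<alpha> x else 0)"
proof (cases "validD E ks \<alpha>")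
  case False
  then show ?thesis
    by (simp add: Dhat_def dhat_def)
next
  case \<alpha>: True
  define S where "S = (\<Sum>e\<in>E. if 1 \<le> \<alpha> e then pd q (G (\<alpha>(e := \<alpha> e - 1))) x * x (shift i e) else 0)"
  define P where "P = (if q \<in> E \<and> 1 \<le> \<alpha> q then pdx i (G (\<alpha>(q := \<alpha> q - 1))) x else 0)"
  define L where "L = (\<Sum>e\<in>E. if 1 \<le> \<alpha> e \<and> q \<in> E \<and> 1 \<le> (\<alpha>(e := \<alpha> e - 1)) q
      then G ((\<alpha>(e := \<alpha> e - 1))(q := (\<alpha>(e := \<alpha> e - 1)) q - 1)) x * x (shift i e) else 0)"
  have "Dhat E ks q (dhat E ks i G) \<alpha> x = pd q (dhat E ks i G \<alpha>) x
      + (if q \<in> E \<and> 1 \<le> \<alpha> q then dhat E ks i G (\<alpha>(q := \<alpha> q - 1)) x else 0)"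
    by (simp add: Dhat_valid[OF \<alpha>])
  also have "\<dots> = pdx i (pd q (G \<alpha>)) x + (if 1 \<le> snd q i then Dhat E ks (unshift i q) G \<alpha> x else 0)
      + S + (P + L)"
  proof -
    have "(if q \<in> E \<and> 1 \<le> \<alpha> q then dhat E ks i G (\<alpha>(q := \<alpha> q - 1)) x else 0) = P + L"
      unfolding L_def sum_lower_lower_swap[of q E \<alpha> "\<lambda>\<beta> e. G \<beta> x * x (shift i e)", symmetric]
        P_def dhat_valid[OF validD_lower[OF \<alpha>]]
      by simp
    then show ?thesis
      unfolding pd_dhat[OF G E \<alpha>] S_def by simp
  qed
  finally have lhs: "Dhat E ks q (dhat E ks i G) \<alpha> x = pdx i (pd q (G \<alpha>)) x
      + (if 1 \<le> snd q i then Dhat E ks (unshift i q) G \<alpha> x else 0) + S + (P + L)" .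
  have rhs: "dhat E ks i (Dhat E ks q G) \<alpha> x = pdx i (pd q (G \<alpha>)) x + P + S + L"
    unfolding P_def S_def L_def by (rule dhat_Dhat_eq[OF G \<alpha>])
  show ?thesis
    unfolding lhs rhs by simp
qed

section \<open>Iterating the commutation relation\<close>

lemma sum_choose_Suc_split:
  fixes f :: "nat \<Rightarrow> 'a::comm_semiring_1"
  shows "(\<Sum>j\<le>Suc n. of_nat (Suc n choose j) * f j)
    = (\<Sum>j\<le>n. of_nat (n choose j) * f j) + (\<Sum>j\<le>n. of_nat (n choose j) * f (Suc j))"
proof -
  have "(\<Sum>j\<le>Suc n. of_nat (Suc n choose j) * f j)
      = f 0 + (\<Sum>j\<le>n. of_nat (n choose Suc j) * f (Suc j)) + (\<Sum>j\<le>n. of_nat (n choose j) * f (Suc j))"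
    by (simp only: sum.atMost_Suc_shift) (simp add: sum.distrib algebra_simps)
  also have "f 0 + (\<Sum>j\<le>n. of_nat (n choose Suc j) * f (Suc j)) = (\<Sum>j\<le>Suc n. of_nat (n choose j) * f j)"
    by (simp only: sum.atMost_Suc_shift) simp
  also have "\<dots> = (\<Sum>j\<le>n. of_nat (n choose j) * f j)"
    by (simp add: binomial_eq_0)
  finally show ?thesis .
qed

text \<open>D(t, p - l) with the convention of the statement that it vanishes unless l \<le> p;
  the truncated difference p - l alone would give the wrong operator.\<close>

definition Dhat_minus ::
    "('l, 'i) idx set \<Rightarrow> nat \<Rightarrow> 'l \<Rightarrow> ('i \<Rightarrow> nat) \<Rightarrow> ('i \<Rightarrow> nat) \<Rightarrow> ('l, 'i) dfn \<Rightarrow> ('l, 'i) dfn" where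
  "Dhat_minus E ks t p l G = (if l \<le> p then Dhat E ks (t, p - l) G else (\<lambda>\<alpha> x. 0))"

lemma smooth_dfn_Dhat_minus: "smooth_dfn G \<Longrightarrow> smooth_dfn (Dhat_minus E ks t p l G)"
  unfolding Dhat_minus_def by (simp add: smooth_dfn_Dhat smooth_dfn_zero)

lemma dhat_zero: "dhat E ks i (\<lambda>\<alpha> x. 0) = (\<lambda>\<alpha> x. 0)"
  using dhat_lincomb[of "{}" "\<lambda>_. \<lambda>\<alpha> x. 0" E ks i "\<lambda>_. 0"] by simp

lemma unshift_minus: "unshift i (t, p - l) = (t, p - l(i := l i + 1))"
  unfolding unshift_def by (auto simp: fun_eq_iff)

lemma fun_upd_Suc_le_iff:
  fixes l p :: "'i \<Rightarrow> nat"
  shows "l(i := l i + 1) \<le> p \<longleftrightarrow> l \<le> p \<and> 1 \<le> (p - l) i"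
proof
  assume le: "l(i := l i + 1) \<le> p"
  have "l j \<le> p j" for j
    using le_funD[OF le, of j] by (cases "j = i") auto
  moreover have "l i + 1 \<le> p i"
    using le_funD[OF le, of i] by simp
  ultimately show "l \<le> p \<and> 1 \<le> (p - l) i"
    by (auto simp: le_fun_def)
next
  assume "l \<le> p \<and> 1 \<le> (p - l) i"
  then show "l(i := l i + 1) \<le> p"
    by (auto simp: le_fun_def)
qed

lemma Dhat_minus_dhat_commute:
  assumes "smooth_dfn G" "finite E"
  shows "Dhat_minus E ks t p l (dhat E ks i G)
    = (\<lambda>\<alpha> x. dhat E ks i (Dhat_minus E ks t p l G) \<alpha> x + Dhat_minus E ks t p (l(i := l i + 1)) G \<alpha> x)"
proof (cases "l \<le> p")
  case True
  then show ?thesis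
    using Dhat_dhat_commute[OF assms, of ks "(t, p - l)" i]
    unfolding Dhat_minus_def fun_upd_Suc_le_iff unshift_minus by (auto simp: fun_eq_iff)
next
  case False
  then show ?thesis
    unfolding Dhat_minus_def fun_upd_Suc_le_iff by (simp add: dhat_zero)
qed

lemma smooth_dfn_dhat_pow: "smooth_dfn G \<Longrightarrow> smooth_dfn ((dhat E ks i ^^ n) G)"
  by (induction n) (auto intro: smooth_dfn_dhat)

lemma dhat_pow_lincomb:
  assumes "finite J" and "\<And>j. j \<in> J \<Longrightarrow> smooth_dfn (H j)"
  shows "(dhat E ks i ^^ n) (\<lambda>\<alpha> x. \<Sum>j\<in>J. c j * H j \<alpha> x)
    = (\<lambda>\<alpha> x. \<Sum>j\<in>J. c j * (dhat E ks i ^^ n) (H j) \<alpha> x)"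
  by (induction n) (simp_all add: dhat_lincomb assms smooth_dfn_dhat_pow)

lemma Dhat_minus_dhat_pow:
  assumes G: "smooth_dfn G" and E: "finite E"
  shows "Dhat_minus E ks t p l ((dhat E ks i ^^ n) G)
    = (\<lambda>\<alpha> x. \<Sum>j\<le>n. real (n choose j) *
        (dhat E ks i ^^ (n - j)) (Dhat_minus E ks t p (l(i := l i + j)) G) \<alpha> x)"
proof (induction n arbitrary: l)
  case (Suc n)
  define T where "T j = (dhat E ks i ^^ (Suc n - j)) (Dhat_minus E ks t p (l(i := l i + j)) G)" for j
  have "dhat E ks i (Dhat_minus E ks t p l ((dhat E ks i ^^ n) G))
      = (\<lambda>\<alpha> x. \<Sum>j\<le>n. real (n choose j) * T j \<alpha> x)"
    unfolding Suc.IH T_def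
    by (subst dhat_lincomb) (simp_all add: smooth_dfn_dhat_pow smooth_dfn_Dhat_minus G Suc_diff_le)
  moreover have "Dhat_minus E ks t p (l(i := l i + 1)) ((dhat E ks i ^^ n) G)
      = (\<lambda>\<alpha> x. \<Sum>j\<le>n. real (n choose j) * T (Suc j) \<alpha> x)"
    unfolding Suc.IH T_def by simp
  ultimately show ?case
    unfolding T_def[symmetric] sum_choose_Suc_split
    by (simp add: Dhat_minus_dhat_commute smooth_dfn_dhat_pow G E)
qed simp

definition multi_indices :: "('i \<Rightarrow> nat) \<Rightarrow> 'i set \<Rightarrow> ('i \<Rightarrow> nat) set" where
  "multi_indices k S = {m. m \<le> k \<and> (\<forall>i. i \<notin> S \<longrightarrow> m i = 0)}"

lemma multi_indices_empty: "multi_indices k {} = {0}"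
  unfolding multi_indices_def by (auto simp: le_fun_def)

lemma multi_indices_UNIV: "multi_indices k UNIV = {m. m \<le> k}"
  unfolding multi_indices_def by simp

lemma bij_betw_multi_indices_insert:
  assumes "i \<notin> S"
  shows "bij_betw (\<lambda>(m, j). m(i := j)) (multi_indices k S \<times> {..k i}) (multi_indices k (insert i S))"
proof (rule bij_betw_byWitness[where f' = "\<lambda>m. (m(i := 0), m i)"])
  show "\<forall>a \<in> multi_indices k S \<times> {..k i}. (\<lambda>m. (m(i := 0), m i)) ((\<lambda>(m, j). m(i := j)) a) = a"
    using assms by (auto simp: multi_indices_def fun_eq_iff)
  show "\<forall>m \<in> multi_indices k (insert i S). (\<lambda>(m, j). m(i := j)) ((\<lambda>m. (m(i := 0), m i)) m) = m"
    by simp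
  show "(\<lambda>(m, j). m(i := j)) ` (multi_indices k S \<times> {..k i}) \<subseteq> multi_indices k (insert i S)"
    by (auto simp: multi_indices_def le_fun_def)
  show "(\<lambda>m. (m(i := 0), m i)) ` multi_indices k (insert i S) \<subseteq> multi_indices k S \<times> {..k i}"
    by (auto simp: multi_indices_def le_fun_def)
qed

lemma sum_multi_indices_insert:
  assumes "i \<notin> S"
  shows "(\<Sum>m\<in>multi_indices k (insert i S). f m) = (\<Sum>m\<in>multi_indices k S. \<Sum>j\<le>k i. f (m(i := j)))"
  by (simp add: sum.reindex_bij_betw[OF bij_betw_multi_indices_insert[OF assms], symmetric]
      sum.cartesian_product case_prod_beta)

definition dpow_list :: "('l, 'i) idx set \<Rightarrow> nat \<Rightarrow> 'i list \<Rightarrow> ('i \<Rightarrow> nat) \<Rightarrow> ('l, 'i) dfn \<Rightarrow> ('l, 'i) dfn" where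
  "dpow_list E ks is k G = fold (\<lambda>i G. (dhat E ks i ^^ k i) G) is G"

lemma dpow_list_Nil [simp]: "dpow_list E ks [] k G = G"
  unfolding dpow_list_def by simp

lemma dpow_list_Cons: "dpow_list E ks (i # is) k G = dpow_list E ks is k ((dhat E ks i ^^ k i) G)"
  unfolding dpow_list_def by simp

lemma dpow_list_cong: "(\<And>i. i \<in> set is \<Longrightarrow> k i = k' i) \<Longrightarrow> dpow_list E ks is k G = dpow_list E ks is k' G"
  by (induction "is" arbitrary: G) (auto simp: dpow_list_Cons)

lemma dpow_list_lincomb:
  assumes "finite J" and "\<And>j. j \<in> J \<Longrightarrow> smooth_dfn (H j)"
  shows "dpow_list E ks is k (\<lambda>\<alpha> x. \<Sum>j\<in>J. c j * H j \<alpha> x)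
    = (\<lambda>\<alpha> x. \<Sum>j\<in>J. c j * dpow_list E ks is k (H j) \<alpha> x)"
  using assms(2)
  by (induction "is" arbitrary: H)
     (simp_all add: dpow_list_Cons dhat_pow_lincomb[OF assms(1)] smooth_dfn_dhat_pow)

lemma dpow_list_zero: "dpow_list E ks is k (\<lambda>\<alpha> x. 0) = (\<lambda>\<alpha> x. 0)"
  using dpow_list_lincomb[of "{}" "\<lambda>_. \<lambda>\<alpha> x. 0" E ks "is" k "\<lambda>_. 0"] by simp

lemma prod_choose_insert_fun_upd:
  assumes "finite S" "i \<notin> S"
  shows "(\<Prod>i'\<in>S. k i' choose m i') * (k i choose j) = (\<Prod>i'\<in>insert i S. k i' choose (m(i := j)) i')"
proof -
  have "(\<Prod>i'\<in>S. k i' choose (m(i := j)) i') = (\<Prod>i'\<in>S. k i' choose m i')"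
    using assms(2) by (intro prod.cong) auto
  then show ?thesis
    using assms by simp
qed

lemma dpow_list_Dhat_minus_dhat_pow:
  assumes "smooth_dfn G" "finite E" "i \<notin> set is" "m i = 0"
  shows "dpow_list E ks is (k - m) (Dhat_minus E ks t p (l + m) ((dhat E ks i ^^ k i) G)) \<alpha> x
    = (\<Sum>j\<le>k i. real (k i choose j) *
        dpow_list E ks (i # is) (k - m(i := j)) (Dhat_minus E ks t p (l + m(i := j)) G) \<alpha> x)"
proof -
  have "(l + m)(i := (l + m) i + j) = l + m(i := j)" for j
    using assms(4) by (auto simp: fun_eq_iff)
  moreover have "dpow_list E ks is (k - m) H = dpow_list E ks is (k - m(i := j)) H" for j H
    using assms(3) by (intro dpow_list_cong) auto
  ultimately show ?thesis
    using assms(1,2) by (simp add: Dhat_minus_dhat_pow dpow_list_lincomb dpow_list_Cons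
        smooth_dfn_dhat_pow smooth_dfn_Dhat_minus)
qed

lemma Dhat_minus_dpow_list:
  assumes G: "smooth_dfn G" and E: "finite E" and "distinct is"
  shows "Dhat_minus E ks t p l (dpow_list E ks is k G)
    = (\<lambda>\<alpha> x. \<Sum>m\<in>multi_indices k (set is). real (\<Prod>i\<in>set is. k i choose m i) *
        dpow_list E ks is (k - m) (Dhat_minus E ks t p (l + m) G) \<alpha> x)"
  using assms(3) G
proof (induction "is" arbitrary: G l)
  case Nil
  then show ?case
    by (simp add: multi_indices_empty)
next
  case (Cons i "is")
  then have i: "i \<notin> set is" and "distinct is"
    by simp_all
  define F where "F m' \<alpha> x = real (\<Prod>i'\<in>set (i # is). k i' choose m' i') *
      dpow_list E ks (i # is) (k - m') (Dhat_minus E ks t p (l + m') G) \<alpha> x" for m' \<alpha> x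
  have per_index: "real (\<Prod>i\<in>set is. k i choose m i) *
        dpow_list E ks is (k - m) (Dhat_minus E ks t p (l + m) ((dhat E ks i ^^ k i) G)) \<alpha> x
      = (\<Sum>j\<le>k i. F (m(i := j)) \<alpha> x)" if "m \<in> multi_indices k (set is)" for m \<alpha> x
  proof -
    have "m i = 0"
      using that i unfolding multi_indices_def by blast
    show ?thesis
      unfolding dpow_list_Dhat_minus_dhat_pow[where m = m, OF Cons.prems(2) E i \<open>m i = 0\<close>] F_def sum_distrib_left
        mult.assoc[symmetric] of_nat_mult[symmetric] prod_choose_insert_fun_upd[OF finite_set i] set_simps ..
  qed
  have "Dhat_minus E ks t p l (dpow_list E ks (i # is) k G)
      = (\<lambda>\<alpha> x. \<Sum>m\<in>multi_indices k (set is). real (\<Prod>i\<in>set is. k i choose m i) *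
          dpow_list E ks is (k - m) (Dhat_minus E ks t p (l + m) ((dhat E ks i ^^ k i) G)) \<alpha> x)"
    unfolding dpow_list_Cons by (rule Cons.IH[OF \<open>distinct is\<close> smooth_dfn_dhat_pow[OF Cons.prems(2)]])
  also have "\<dots> = (\<lambda>\<alpha> x. \<Sum>m\<in>multi_indices k (set is). \<Sum>j\<le>k i. F (m(i := j)) \<alpha> x)"
    by (intro ext sum.cong refl) (rule per_index)
  also have "\<dots> = (\<lambda>\<alpha> x. \<Sum>m\<in>multi_indices k (set (i # is)). F m \<alpha> x)"
    by (simp only: set_simps sum_multi_indices_insert[OF i])
  finally show ?case
    unfolding F_def .
qed

theorem lemma3p17:
  fixes Eplus :: "'l::finite \<Rightarrow> ('l, 'i::{finite,linorder}) idx set"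
    and kstar :: nat and k p :: "'i \<Rightarrow> nat" and t lab :: 'l
    and Fh :: "('l, 'i) dfn"
  assumes "CARD('i) \<ge> 2"
    and "\<forall>l. finite (Eplus l)"
    and "Fh \<in> DP (Eplus lab) kstar"
  shows "(\<lambda>\<alpha> x. \<Sum>l\<in>{l. l \<le> k}.
            real (\<Prod>i\<in>UNIV. k i choose l i) *
            (if l \<le> p then dpow (Eplus lab) kstar (k - l)
                               (Dhat (Eplus lab) kstar (t, p - l) Fh) \<alpha> x
             else 0))
         = Dhat (Eplus lab) kstar (t, p) (dpow (Eplus lab) kstar k Fh)"
proof -
  define E where "E = Eplus lab"
  define "is" where "is = sorted_list_of_set (UNIV :: 'i set)"
  have E: "finite E"
    using assms(2) unfolding E_def by blast
  have G: "smooth_dfn Fh"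
    using assms(3) unfolding E_def by (rule DP_imp_smooth_dfn)
  have "distinct is" and set_is: "set is = UNIV"
    unfolding is_def by simp_all
  have dpow: "dpow E kstar k' H = dpow_list E kstar is k' H" for k' H
    unfolding dpow_def dpow_list_def is_def ..
  have "(\<lambda>\<alpha> x. \<Sum>l\<in>{l. l \<le> k}. real (\<Prod>i\<in>UNIV. k i choose l i) *
          (if l \<le> p then dpow E kstar (k - l) (Dhat E kstar (t, p - l) Fh) \<alpha> x else 0))
      = (\<lambda>\<alpha> x. \<Sum>l\<in>multi_indices k (set is). real (\<Prod>i\<in>set is. k i choose l i) *
          dpow_list E kstar is (k - l) (Dhat_minus E kstar t p (0 + l) Fh) \<alpha> x)"
    unfolding set_is multi_indices_UNIV Dhat_minus_def dpow
    by (intro ext sum.cong refl) (simp add: dpow_list_zero fun_eq_iff)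
  also have "\<dots> = Dhat_minus E kstar t p 0 (dpow_list E kstar is k Fh)"
    by (rule Dhat_minus_dpow_list[OF G E \<open>distinct is\<close>, symmetric])
  also have "\<dots> = Dhat E kstar (t, p) (dpow E kstar k Fh)"
    unfolding Dhat_minus_def dpow by (simp add: le_fun_def fun_diff_def)
  finally show ?thesis
    unfolding E_def .
qed

end
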